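(* Let $E$ be a (Hausdorff, real) topological vector space and $A\subseteq E\setminus\{0\}$. The following are equivalent: (i) the linear Kalton map $lK_A:lS_A\to E$ is continuous; (ii) the Kalton map $K_A:S_A\to E$ is continuous; (iii) the set $A$ is absolutely Cauchy summable.
   Context: For $a\in E$, $\langle a\rangle$ denotes the additive cyclic subgroup generated by $a$ and $\mathbb{R}a=\{ra:r\in\mathbb{R}\}$, both with the subspace topology. $S_A=\bigoplus_{a\in A}\langle a\rangle$ and $lS_A=\bigoplus_{a\in A}\mathbb{R}a$ denote the finitely supported elements of $\prod_{a\in A}\langle a\rangle$, resp. $\prod_{a\in A}\mathbb{R}a$, with the subspace topology of the Tychonoff product topology. The Kalton map $K_A:S_A\to E$ is the unique group homomorphism extending each inclusion $\langle a\rangle\to E$, and the linear Kalton map $lK_A:lS_A\to E$ is the unique linear map extending each inclusion $\mathbb{R}a\to E$. $A$ is absolutely Cauchy summable if for every neighbourhood $U$ of $0$ there is a finite $F\subseteq A$ such that the additive subgroup generated by $A\setminus F$ is contained in $U$. *)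

theory Defs
  imports "HOL-Analysis.Analysis"
begin

definition cyc :: "'a::real_vector \<Rightarrow> 'a set" where
  "cyc a = range (\<lambda>n::int. of_int n *\<^sub>R a)"

definition rline :: "'a::real_vector \<Rightarrow> 'a set" where
  "rline a = range (\<lambda>r::real. r *\<^sub>R a)"

text \<open>Finitely supported elements of the product over A of the sets C a
  (functions are extensional: undefined outside A, as in PiE / product_topology).\<close>
definition fin_supp :: "'a set \<Rightarrow> ('a \<Rightarrow> 'b::real_vector set) \<Rightarrow> ('a \<Rightarrow> 'b) set" where
  "fin_supp A C = {f \<in> PiE A C. finite {a \<in> A. f a \<noteq> 0}}"

definition S_top :: "'a::{real_vector,topological_space} set \<Rightarrow> ('a \<Rightarrow> 'a) topology" where
  "S_top A = subtopology (product_topology (\<lambda>a. top_of_set (cyc a)) A) (fin_supp A cyc)"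

definition lS_top :: "'a::{real_vector,topological_space} set \<Rightarrow> ('a \<Rightarrow> 'a) topology" where
  "lS_top A = subtopology (product_topology (\<lambda>a. top_of_set (rline a)) A) (fin_supp A rline)"

text \<open>The (linear) Kalton map: the homomorphism extending the inclusions,
  i.e. the sum of the (finitely many nonzero) coordinates.\<close>
definition kalton :: "'a set \<Rightarrow> ('a \<Rightarrow> 'a::real_vector) \<Rightarrow> 'a" where
  "kalton A f = (\<Sum>a\<in>{a \<in> A. f a \<noteq> 0}. f a)"

definition add_subgroup_gen :: "'a::ab_group_add set \<Rightarrow> 'a set" where
  "add_subgroup_gen B = \<Inter>{G. B \<subseteq> G \<and> 0 \<in> G \<and> (\<forall>x\<in>G. \<forall>y\<in>G. x + y \<in> G) \<and> (\<forall>x\<in>G. - x \<in> G)}"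

definition abs_cauchy_summable :: "'a::{real_vector,topological_space} set \<Rightarrow> bool" where
  "abs_cauchy_summable A \<longleftrightarrow>
     (\<forall>U. open U \<and> 0 \<in> U \<longrightarrow> (\<exists>F. finite F \<and> F \<subseteq> A \<and> add_subgroup_gen (A - F) \<subseteq> U))"

end

theory Submission
  imports Defs
begin

text \<open>
  (i) implies (ii) because \<open>S\<^sub>A\<close> carries the subspace topology of \<open>lS\<^sub>A\<close>.

  (ii) implies (iii): continuity at \<open>0\<close> yields a basic product neighbourhood, which contains
  all elements of \<open>S\<^sub>A\<close> vanishing on some finite \<open>F \<subseteq> A\<close>. These form a subgroup whose image
  under \<open>K\<^sub>A\<close> is a subgroup of \<open>E\<close> containing \<open>A - F\<close>, hence the subgroup generated by \<open>A - F\<close>.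

  (iii) implies (i): real coefficients are approximated by integer ones,
  \<open>\<Sum> r\<^sub>a a = (1/N) \<Sum> \<lfloor>N r\<^sub>a\<rfloor> a + \<Sum> (\<theta>\<^sub>a/N) a\<close> with \<open>0 \<le> \<theta>\<^sub>a < 1\<close>,
  so the linear span of \<open>A - F\<close> is small as soon as the subgroup generated by \<open>A - F\<close> is.
  Near a point \<open>f\<close>, \<open>lK\<^sub>A g - lK\<^sub>A f\<close> is then a sum over the finitely many coordinates in \<open>F\<close>,
  controlled by the product topology, plus an element of that span.
\<close>

lemma add_subgroup_gen_base: "B \<subseteq> add_subgroup_gen B"
  and add_subgroup_gen_0: "0 \<in> add_subgroup_gen B"
  and add_subgroup_gen_add: "x \<in> add_subgroup_gen B \<Longrightarrow> y \<in> add_subgroup_gen B \<Longrightarrow> x + y \<in> add_subgroup_gen B"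
  and add_subgroup_gen_minus: "x \<in> add_subgroup_gen B \<Longrightarrow> - x \<in> add_subgroup_gen B"
  unfolding add_subgroup_gen_def by auto

lemma add_subgroup_gen_least:
  assumes "B \<subseteq> G" "0 \<in> G" "\<And>x y. x \<in> G \<Longrightarrow> y \<in> G \<Longrightarrow> x + y \<in> G" "\<And>x. x \<in> G \<Longrightarrow> - x \<in> G"
  shows "add_subgroup_gen B \<subseteq> G"
  unfolding add_subgroup_gen_def by (intro Inter_lower CollectI conjI ballI assms)

lemma of_nat_scaleR_in_add_subgroup_gen:
  fixes b :: "'a::real_vector"
  assumes "b \<in> B"
  shows "of_nat n *\<^sub>R b \<in> add_subgroup_gen B"
proof (induction n)
  case 0
  then show ?case by (simp add: add_subgroup_gen_0)
next
  case (Suc n)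
  have "of_nat (Suc n) *\<^sub>R b = of_nat n *\<^sub>R b + b"
    by (simp add: algebra_simps)
  then show ?case
    using Suc assms add_subgroup_gen_base add_subgroup_gen_add by (metis subsetD)
qed

lemma of_int_scaleR_in_add_subgroup_gen:
  fixes b :: "'a::real_vector"
  assumes "b \<in> B"
  shows "of_int m *\<^sub>R b \<in> add_subgroup_gen B"
proof (cases "m \<ge> 0")
  case True
  then have "of_int m *\<^sub>R b = of_nat (nat m) *\<^sub>R b" by simp
  then show ?thesis using of_nat_scaleR_in_add_subgroup_gen[OF assms] by metis
next
  case False
  then have "of_int m *\<^sub>R b = - (of_nat (nat (- m)) *\<^sub>R b)" by simp
  then show ?thesis
    using of_nat_scaleR_in_add_subgroup_gen[OF assms] add_subgroup_gen_minus by metis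
qed

lemma sum_of_int_scaleR_in_add_subgroup_gen:
  fixes B :: "'a::real_vector set"
  assumes "finite S" "S \<subseteq> B"
  shows "(\<Sum>a\<in>S. of_int (m a) *\<^sub>R a) \<in> add_subgroup_gen B"
  using assms
proof (induction S rule: finite_induct)
  case empty
  then show ?case by (simp add: add_subgroup_gen_0)
next
  case (insert x S)
  then show ?case
    using add_subgroup_gen_add of_int_scaleR_in_add_subgroup_gen[of x B "m x"] by simp
qed

lemma scaleR_floor_split:
  fixes a :: "'a::real_vector"
  assumes "N > 0"
  shows "r *\<^sub>R a = (1 / N) *\<^sub>R (of_int \<lfloor>N * r\<rfloor> *\<^sub>R a) + ((N * r - of_int \<lfloor>N * r\<rfloor>) / N) *\<^sub>R a"
proof -
  have "r = 1 / N * of_int \<lfloor>N * r\<rfloor> + (N * r - of_int \<lfloor>N * r\<rfloor>) / N"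
    using assms by (simp add: field_simps)
  then show ?thesis
    by (metis scaleR_add_left scaleR_scaleR)
qed

lemma zero_in_cyc: "0 \<in> cyc a"
  and self_in_cyc: "a \<in> cyc a"
  unfolding cyc_def by (auto intro: range_eqI[of _ _ 0] range_eqI[of _ _ 1])

lemma cyc_add:
  assumes "x \<in> cyc a" "y \<in> cyc a"
  shows "x + y \<in> cyc a"
proof -
  obtain n m :: int where "x = of_int n *\<^sub>R a" "y = of_int m *\<^sub>R a"
    using assms unfolding cyc_def by auto
  then have "x + y = of_int (n + m) *\<^sub>R a" by (simp add: scaleR_add_left)
  then show ?thesis unfolding cyc_def by (rule ssubst) (rule rangeI)
qed

lemma cyc_minus:
  assumes "x \<in> cyc a"
  shows "- x \<in> cyc a"
proof -
  obtain n :: int where "x = of_int n *\<^sub>R a"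
    using assms unfolding cyc_def by auto
  then have "- x = of_int (- n) *\<^sub>R a" by simp
  then show ?thesis unfolding cyc_def by (rule ssubst) (rule rangeI)
qed

lemma cyc_subset_rline: "cyc a \<subseteq> rline a"
  unfolding cyc_def rline_def by auto

lemma rline_subset_span: "rline a \<subseteq> span {a}"
  unfolding rline_def by (auto intro: span_scale span_base)

lemma fin_supp_cyc_add:
  assumes "g \<in> fin_supp A cyc" "h \<in> fin_supp A cyc"
  shows "(\<lambda>a\<in>A. g a + h a) \<in> fin_supp A cyc"
proof -
  have "(\<lambda>a\<in>A. g a + h a) \<in> PiE A cyc"
    using assms unfolding fin_supp_def by (auto simp: PiE_iff cyc_add)
  moreover have "finite {a \<in> A. (\<lambda>a\<in>A. g a + h a) a \<noteq> 0}"
    by (rule finite_subset[of _ "{a \<in> A. g a \<noteq> 0} \<union> {a \<in> A. h a \<noteq> 0}"])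
      (use assms in \<open>auto simp: fin_supp_def\<close>)
  ultimately show ?thesis
    unfolding fin_supp_def by blast
qed

lemma fin_supp_cyc_minus:
  assumes "g \<in> fin_supp A cyc"
  shows "(\<lambda>a\<in>A. - g a) \<in> fin_supp A cyc"
proof -
  have "(\<lambda>a\<in>A. - g a) \<in> PiE A cyc"
    using assms unfolding fin_supp_def by (auto simp: PiE_iff cyc_minus)
  moreover have "{a \<in> A. (\<lambda>a\<in>A. - g a) a \<noteq> 0} = {a \<in> A. g a \<noteq> 0}"
    by auto
  ultimately show ?thesis
    using assms unfolding fin_supp_def by simp
qed

lemma kalton_eq_sum:
  assumes "finite T" "T \<subseteq> A" "{a \<in> A. f a \<noteq> 0} \<subseteq> T"
  shows "kalton A f = sum f T"
  unfolding kalton_def using assms by (intro sum.mono_neutral_left) auto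

lemma kalton_add:
  assumes "finite {a \<in> A. g a \<noteq> 0}" "finite {a \<in> A. h a \<noteq> 0}"
  shows "kalton A (\<lambda>a\<in>A. g a + h a) = kalton A g + kalton A h"
proof -
  define T where "T = {a \<in> A. g a \<noteq> 0} \<union> {a \<in> A. h a \<noteq> 0}"
  have T: "finite T" "T \<subseteq> A"
    using assms unfolding T_def by auto
  have "kalton A (\<lambda>a\<in>A. g a + h a) = (\<Sum>a\<in>T. g a + h a)"
    using T by (subst kalton_eq_sum[of T]) (auto simp: T_def intro: sum.cong)
  also have "\<dots> = kalton A g + kalton A h"
    using T by (simp add: sum.distrib kalton_eq_sum[of T] T_def)
  finally show ?thesis .
qed

lemma kalton_minus: "kalton A (\<lambda>a\<in>A. - g a) = - kalton A g"
proof -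
  have "{a \<in> A. (\<lambda>a\<in>A. - g a) a \<noteq> 0} = {a \<in> A. g a \<noteq> 0}"
    by auto
  then have "kalton A (\<lambda>a\<in>A. - g a) = (\<Sum>a\<in>{a \<in> A. g a \<noteq> 0}. - g a)"
    unfolding kalton_def by (intro sum.cong) auto
  then show ?thesis
    by (simp add: kalton_def sum_negf)
qed

lemma kalton_zero: "kalton A (\<lambda>a\<in>A. 0) = 0"
  unfolding kalton_def by simp

lemma kalton_single:
  assumes "b \<in> A" "b \<noteq> 0"
  shows "kalton A (\<lambda>a\<in>A. if a = b then b else 0) = b"
proof -
  have "{a \<in> A. (\<lambda>a\<in>A. if a = b then b else 0) a \<noteq> 0} = {b}"
    using assms by auto
  then show ?thesis unfolding kalton_def using assms by simp
qed

lemma S_top_eq_subtopology_lS_top: "S_top A = subtopology (lS_top A) (fin_supp A cyc)"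
proof -
  have fin_supp_cyc: "fin_supp A cyc = PiE A cyc \<inter> fin_supp A cyc"
    unfolding fin_supp_def by auto
  have "fin_supp A cyc \<subseteq> fin_supp A rline"
    using cyc_subset_rline unfolding fin_supp_def by (auto simp: PiE_iff)
  then have "subtopology (lS_top A) (fin_supp A cyc)
      = subtopology (subtopology (product_topology (\<lambda>a. top_of_set (rline a)) A) (PiE A cyc))
          (fin_supp A cyc)"
    unfolding lS_top_def subtopology_subtopology
    by (metis Int_absorb1 Int_assoc fin_supp_cyc)
  also have "\<dots> = S_top A"
    unfolding subtopology_product_topology S_top_def
    by (simp add: subtopology_subtopology Int_absorb1 cyc_subset_rline)
  finally show ?thesis by simp
qed

lemma openin_lS_top_coordinates:
  assumes "finite F" "F \<subseteq> A" "\<And>a. a \<in> F \<Longrightarrow> open (G a)"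
  shows "openin (lS_top A) {g \<in> fin_supp A rline. \<forall>a\<in>F. g a \<in> G a}"
proof -
  define V where "V a = (if a \<in> F then rline a \<inter> G a else rline a)" for a
  have "openin (product_topology (\<lambda>a. top_of_set (rline a)) A) (PiE A V)"
  proof -
    have "finite {a \<in> A. V a \<noteq> topspace (top_of_set (rline a))}"
      by (rule finite_subset[OF _ assms(1)]) (auto simp: V_def)
    moreover have "openin (top_of_set (rline a)) (V a)" for a
      using assms(3) by (auto simp: V_def openin_open_Int)
    ultimately show ?thesis by (simp add: openin_PiE_gen)
  qed
  then have "openin (lS_top A) (PiE A V \<inter> fin_supp A rline)"
    unfolding lS_top_def by (rule openin_subtopology_Int)
  moreover have "PiE A V \<inter> fin_supp A rline = {g \<in> fin_supp A rline. \<forall>a\<in>F. g a \<in> G a}"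
  proof (intro set_eqI iffI)
    fix g assume g: "g \<in> PiE A V \<inter> fin_supp A rline"
    have "g a \<in> G a" if "a \<in> F" for a
      using that assms(2) PiE_mem[OF IntD1[OF g], of a] by (auto simp: V_def)
    then show "g \<in> {g \<in> fin_supp A rline. \<forall>a\<in>F. g a \<in> G a}"
      using g by blast
  next
    fix g assume g: "g \<in> {g \<in> fin_supp A rline. \<forall>a\<in>F. g a \<in> G a}"
    then have "g \<in> PiE A rline"
      unfolding fin_supp_def by blast
    then have "g \<in> PiE A V"
      using g by (auto simp: PiE_iff V_def)
    then show "g \<in> PiE A V \<inter> fin_supp A rline"
      using g by blast
  qed
  ultimately show ?thesis by simp
qed

lemma PiE_mem_if_agrees_where_restricted:
  assumes "g \<in> PiE A C" "z \<in> PiE A V" "\<And>a. a \<in> A \<Longrightarrow> V a \<noteq> C a \<Longrightarrow> g a = z a"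
  shows "g \<in> PiE A V"
proof -
  have "g a \<in> V a" if "a \<in> A" for a
    using assms that by (cases "V a = C a") (auto simp: PiE_iff)
  then show ?thesis
    using assms(1) by (simp add: PiE_iff)
qed

lemma kalton_small_off_finite:
  assumes K: "continuous_map (S_top A) euclidean (kalton A)" and U: "open U" "0 \<in> U"
  obtains F where "finite F" "F \<subseteq> A"
    "\<And>g. g \<in> fin_supp A cyc \<Longrightarrow> \<forall>a\<in>F. g a = 0 \<Longrightarrow> kalton A g \<in> U"
proof -
  have "topspace (S_top A) = fin_supp A cyc"
    unfolding S_top_def fin_supp_def by auto
  then have "openin (S_top A) {g \<in> fin_supp A cyc. kalton A g \<in> U}"
    using K U unfolding continuous_map_def by auto
  then have "\<exists>N. openin (product_topology (\<lambda>a. top_of_set (cyc a)) A) N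
      \<and> {g \<in> fin_supp A cyc. kalton A g \<in> U} = N \<inter> fin_supp A cyc"
    unfolding S_top_def openin_subtopology .
  then obtain N where N: "openin (product_topology (\<lambda>a. top_of_set (cyc a)) A) N"
      "{g \<in> fin_supp A cyc. kalton A g \<in> U} = N \<inter> fin_supp A cyc"
    by blast
  define z where "z = (\<lambda>a\<in>A. 0::'a)"
  have "z \<in> fin_supp A cyc" "kalton A z = 0"
    unfolding z_def fin_supp_def by (auto simp: zero_in_cyc kalton_zero)
  then have "z \<in> {g \<in> fin_supp A cyc. kalton A g \<in> U}"
    using U(2) by simp
  then have "z \<in> N"
    unfolding N(2) by blast
  then obtain V where V: "finite {a \<in> A. V a \<noteq> cyc a}" "z \<in> PiE A V" "PiE A V \<subseteq> N"
    using N(1) unfolding openin_product_topology_alt topspace_euclidean_subtopology by blast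
  have "kalton A g \<in> U"
    if g: "g \<in> fin_supp A cyc" "\<forall>a\<in>{a \<in> A. V a \<noteq> cyc a}. g a = 0" for g
  proof -
    have "g \<in> PiE A cyc"
      using g(1) unfolding fin_supp_def by blast
    moreover have "g a = z a" if "a \<in> A" "V a \<noteq> cyc a" for a
      using g(2) that unfolding z_def by simp
    ultimately have "g \<in> PiE A V"
      by (rule PiE_mem_if_agrees_where_restricted[OF _ V(2)])
    then show ?thesis
      using V(3) N(2) g(1) by blast
  qed
  moreover have "finite {a \<in> A. V a \<noteq> cyc a}" "{a \<in> A. V a \<noteq> cyc a} \<subseteq> A"
    using V(1) by auto
  ultimately show thesis
    using that by blast
qed

lemma add_subgroup_gen_subset_kalton_image:
  assumes "0 \<notin> A" "F \<subseteq> A"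
  shows "add_subgroup_gen (A - F) \<subseteq> kalton A ` {g \<in> fin_supp A cyc. \<forall>a\<in>F. g a = 0}"
    (is "_ \<subseteq> kalton A ` ?H")
proof (rule add_subgroup_gen_least)
  show "A - F \<subseteq> kalton A ` ?H"
  proof
    fix b assume b: "b \<in> A - F"
    define g where "g = (\<lambda>a\<in>A. if a = b then b else 0)"
    have "g \<in> ?H"
      using b assms(2) unfolding g_def fin_supp_def by (auto simp: PiE_iff zero_in_cyc self_in_cyc)
    moreover have "kalton A g = b"
      unfolding g_def using b assms(1) by (intro kalton_single) auto
    ultimately show "b \<in> kalton A ` ?H" by force
  qed
  show "0 \<in> kalton A ` ?H"
    using kalton_zero[of A] assms(2)
    by (intro image_eqI[of _ _ "\<lambda>a\<in>A. 0"]) (auto simp: fin_supp_def zero_in_cyc)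
next
  fix x y assume "x \<in> kalton A ` ?H" "y \<in> kalton A ` ?H"
  then obtain g h where gh: "g \<in> ?H" "h \<in> ?H" and "x = kalton A g" "y = kalton A h" by auto
  then have "x + y = kalton A (\<lambda>a\<in>A. g a + h a)"
    by (simp add: kalton_add fin_supp_def)
  moreover have "(\<lambda>a\<in>A. g a + h a) \<in> ?H"
    using gh assms(2) by (auto intro: fin_supp_cyc_add)
  ultimately show "x + y \<in> kalton A ` ?H" by blast
next
  fix x assume "x \<in> kalton A ` ?H"
  then obtain g where g: "g \<in> ?H" and "x = kalton A g" by auto
  then have "- x = kalton A (\<lambda>a\<in>A. - g a)"
    by (simp add: kalton_minus)
  moreover have "(\<lambda>a\<in>A. - g a) \<in> ?H"
    using g assms(2) by (auto intro: fin_supp_cyc_minus)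
  ultimately show "- x \<in> kalton A ` ?H" by blast
qed

lemma abs_cauchy_summable_if_continuous_kalton:
  assumes "continuous_map (S_top A) euclidean (kalton A)" "0 \<notin> A"
  shows "abs_cauchy_summable A"
  unfolding abs_cauchy_summable_def
proof (intro allI impI)
  fix U :: "'a set" assume "open U \<and> 0 \<in> U"
  then obtain F where F: "finite F" "F \<subseteq> A"
    "\<And>g. g \<in> fin_supp A cyc \<Longrightarrow> \<forall>a\<in>F. g a = 0 \<Longrightarrow> kalton A g \<in> U"
    using kalton_small_off_finite[OF assms(1)] by metis
  have "add_subgroup_gen (A - F) \<subseteq> U"
  proof
    fix x assume "x \<in> add_subgroup_gen (A - F)"
    then obtain g where "g \<in> fin_supp A cyc" "\<forall>a\<in>F. g a = 0" "x = kalton A g"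
      using add_subgroup_gen_subset_kalton_image[OF assms(2) F(2)] by blast
    then show "x \<in> U"
      using F(3) by simp
  qed
  then show "\<exists>F. finite F \<and> F \<subseteq> A \<and> add_subgroup_gen (A - F) \<subseteq> U"
    using F(1,2) by blast
qed

lemma kalton_diff_off_finite_in_span:
  assumes "f \<in> fin_supp A rline" "g \<in> fin_supp A rline" "finite F" "F \<subseteq> A"
  shows "kalton A g - kalton A f - (\<Sum>a\<in>F. g a - f a) \<in> span (A - F)"
proof -
  define T where "T = {a \<in> A. g a \<noteq> 0} \<union> {a \<in> A. f a \<noteq> 0} \<union> F"
  have T: "finite T" "T \<subseteq> A" "F \<subseteq> T"
    using assms unfolding T_def fin_supp_def by auto
  have "kalton A g = sum g T" "kalton A f = sum f T"
    using T by (auto intro!: kalton_eq_sum simp: T_def)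
  then have "kalton A g - kalton A f = (\<Sum>a\<in>T. g a - f a)"
    by (simp add: sum_subtractf)
  also have "\<dots> = (\<Sum>a\<in>F. g a - f a) + (\<Sum>a\<in>T - F. g a - f a)"
    using T by (simp add: sum.subset_diff add.commute)
  finally have "kalton A g - kalton A f - (\<Sum>a\<in>F. g a - f a) = (\<Sum>a\<in>T - F. g a - f a)"
    by simp
  also have "\<dots> \<in> span (A - F)"
  proof (rule span_sum)
    fix a assume a: "a \<in> T - F"
    then have "a \<in> A"
      using T(2) by blast
    then have "f a \<in> rline a" "g a \<in> rline a"
      using assms(1,2) unfolding fin_supp_def by (auto simp: PiE_iff)
    then have "f a \<in> span {a}" "g a \<in> span {a}"
      using rline_subset_span by blast+
    moreover have "span {a} \<subseteq> span (A - F)"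
      using a T(2) by (intro span_mono) auto
    ultimately show "g a - f a \<in> span (A - F)"
      by (auto intro: span_diff)
  qed
  finally show ?thesis .
qed

context
  assumes add_cont: "continuous_on UNIV (\<lambda>p::'a::{real_vector,topological_space} \<times> 'a. fst p + snd p)"
    and smult_cont: "continuous_on UNIV (\<lambda>p::real \<times> 'a. fst p *\<^sub>R snd p)"
begin

lemma continuous_on_add_const: "continuous_on UNIV (\<lambda>x::'a. x + c)"
proof -
  have "continuous_on UNIV (\<lambda>x::'a. (x, c))"
    by (rule continuous_on_Pair[OF continuous_on_id continuous_on_const])
  from continuous_on_compose[OF this, of "\<lambda>p::'a \<times> 'a. fst p + snd p"] add_cont
  show ?thesis by (simp add: o_def continuous_on_subset)
qed

lemma continuous_on_scaleR_const: "continuous_on UNIV (\<lambda>t::real. t *\<^sub>R (a::'a))"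
proof -
  have "continuous_on UNIV (\<lambda>t::real. (t, a))"
    by (rule continuous_on_Pair[OF continuous_on_id continuous_on_const])
  from continuous_on_compose[OF this, of "\<lambda>p::real \<times> 'a. fst p *\<^sub>R snd p"] smult_cont
  show ?thesis by (simp add: o_def continuous_on_subset)
qed

lemma open_translate: "open (U::'a set) \<Longrightarrow> open {x. x + c \<in> U}"
  using open_vimage[OF _ continuous_on_add_const] by (simp add: vimage_def)

lemma zero_nhd_add:
  fixes U :: "'a set"
  assumes "open U" "0 \<in> U"
  obtains V1 V2 where "open V1" "open V2" "0 \<in> V1" "0 \<in> V2"
    "\<And>x y. x \<in> V1 \<Longrightarrow> y \<in> V2 \<Longrightarrow> x + y \<in> U"
proof -
  have "open ((\<lambda>p::'a \<times> 'a. fst p + snd p) -` U)" "(0, 0) \<in> (\<lambda>p::'a \<times> 'a. fst p + snd p) -` U"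
    using open_vimage[OF assms(1) add_cont] assms(2) by auto
  then obtain V1 V2 where V: "open V1" "open V2" "(0, 0) \<in> V1 \<times> V2"
      "V1 \<times> V2 \<subseteq> (\<lambda>p::'a \<times> 'a. fst p + snd p) -` U"
    by (rule open_prod_elim)
  have "x + y \<in> U" if "x \<in> V1" "y \<in> V2" for x y
    using that V(4) by auto
  then show thesis
    using that[of V1 V2] V(1-3) by auto
qed

lemma zero_nhd_scaleR:
  fixes U :: "'a set"
  assumes "open U" "0 \<in> U"
  obtains d W where "d > 0" "open W" "0 \<in> W" "\<And>t x. \<bar>t\<bar> < d \<Longrightarrow> x \<in> W \<Longrightarrow> t *\<^sub>R x \<in> U"
proof -
  have "open ((\<lambda>p::real \<times> 'a. fst p *\<^sub>R snd p) -` U)" "(0, 0) \<in> (\<lambda>p::real \<times> 'a. fst p *\<^sub>R snd p) -` U"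
    using open_vimage[OF assms(1) smult_cont] assms(2) by auto
  then obtain D W where DW: "open D" "open W" "(0, 0) \<in> D \<times> W"
      "D \<times> W \<subseteq> (\<lambda>p::real \<times> 'a. fst p *\<^sub>R snd p) -` U"
    by (rule open_prod_elim)
  then obtain d where d: "d > 0" "ball 0 d \<subseteq> D"
    using open_contains_ball by blast
  have "t *\<^sub>R x \<in> U" if "\<bar>t\<bar> < d" "x \<in> W" for t x
  proof -
    have "(t, x) \<in> D \<times> W"
      using that d(2) by (auto simp: dist_real_def)
    then show ?thesis
      using DW(4) by auto
  qed
  then show thesis
    using that[of d W] d(1) DW(2,3) by auto
qed

lemma zero_nhd_sum:
  fixes U :: "'a set"
  assumes "finite F" "open U" "0 \<in> U"
  shows "\<exists>W. open W \<and> 0 \<in> W \<and> (\<forall>h. (\<forall>a\<in>F. h a \<in> W) \<longrightarrow> sum h F \<in> U)"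
  using assms
proof (induction F arbitrary: U rule: finite_induct)
  case empty
  then show ?case by auto
next
  case (insert b F)
  obtain V1 V2 where V: "open V1" "open V2" "0 \<in> V1" "0 \<in> V2"
    "\<And>x y. x \<in> V1 \<Longrightarrow> y \<in> V2 \<Longrightarrow> x + y \<in> U"
    using zero_nhd_add[OF insert.prems] by blast
  obtain W where W: "open W" "0 \<in> W" "\<forall>h. (\<forall>a\<in>F. h a \<in> W) \<longrightarrow> sum h F \<in> V2"
    using insert.IH[OF V(2,4)] by blast
  show ?case
  proof (intro exI[of _ "V1 \<inter> W"] conjI allI impI)
    fix h assume "\<forall>a\<in>insert b F. h a \<in> V1 \<inter> W"
    then have "h b \<in> V1" "sum h F \<in> V2"
      using W(3) by auto
    then show "sum h (insert b F) \<in> U"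
      using V(5) insert.hyps by simp
  qed (use V W in auto)
qed

lemma zero_nhd_small_combination:
  fixes U :: "'a set"
  assumes "finite S" "open U" "0 \<in> U"
  obtains d where "d > 0" "\<And>c. \<forall>a\<in>S. \<bar>c a\<bar> < d \<Longrightarrow> (\<Sum>a\<in>S. c a *\<^sub>R a) \<in> U"
proof -
  obtain W where W: "open W" "0 \<in> W" "\<forall>h. (\<forall>a\<in>S. h a \<in> W) \<longrightarrow> sum h S \<in> U"
    using zero_nhd_sum[OF assms] by blast
  have "eventually (\<lambda>t. t *\<^sub>R a \<in> W) (nhds 0)" for a
  proof -
    have "open {t. t *\<^sub>R a \<in> W}"
      using open_vimage[OF W(1) continuous_on_scaleR_const] by (simp add: vimage_def)
    then show ?thesis
      using W(2) by (auto simp: eventually_nhds)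
  qed
  then have "eventually (\<lambda>t. \<forall>a\<in>S. t *\<^sub>R a \<in> W) (nhds 0)"
    using assms(1) by (simp add: eventually_ball_finite)
  then obtain d where "d > 0" "\<And>t. dist t 0 < d \<Longrightarrow> \<forall>a\<in>S. t *\<^sub>R a \<in> (W::'a set)"
    unfolding eventually_nhds_metric by blast
  then show thesis
    using that[of d] W(3) by (auto simp: dist_real_def)
qed

lemma span_subset_if_add_subgroup_gen_subset:
  fixes V :: "'a set"
  assumes "open V" "0 \<in> V"
  obtains W where "open W" "0 \<in> W" "\<And>B. add_subgroup_gen B \<subseteq> W \<Longrightarrow> span B \<subseteq> V"
proof -
  obtain V1 V2 where V: "open V1" "open V2" "0 \<in> V1" "0 \<in> V2"
    "\<And>x y. x \<in> V1 \<Longrightarrow> y \<in> V2 \<Longrightarrow> x + y \<in> V"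
    using zero_nhd_add[OF assms] by blast
  obtain d1 W where W: "d1 > 0" "open W" "0 \<in> W" "\<And>t x. \<bar>t\<bar> < d1 \<Longrightarrow> x \<in> W \<Longrightarrow> t *\<^sub>R x \<in> V1"
    using zero_nhd_scaleR[OF V(1,3)] by blast
  have "span B \<subseteq> V" if BW: "add_subgroup_gen B \<subseteq> W" for B
  proof
    fix x assume "x \<in> span B"
    then obtain S r where S: "finite S" "S \<subseteq> B" and x: "x = (\<Sum>a\<in>S. r a *\<^sub>R a)"
      unfolding span_explicit by blast
    obtain d2 where d2: "d2 > 0" "\<And>c. \<forall>a\<in>S. \<bar>c a\<bar> < d2 \<Longrightarrow> (\<Sum>a\<in>S. c a *\<^sub>R a) \<in> V2"
      using zero_nhd_small_combination[OF S(1) V(2,4)] by blast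
    obtain n :: nat where n: "n > 0" "inverse (real n) < min d1 d2"
      using ex_inverse_of_nat_less[of "min d1 d2"] W(1) d2(1) by auto
    define N where "N = real n"
    define \<theta> where "\<theta> a = N * r a - of_int \<lfloor>N * r a\<rfloor>" for a
    have N: "N > 0" "1 / N < d1" "1 / N < d2"
      using n unfolding N_def by (auto simp: divide_inverse)
    have "r a *\<^sub>R a = (1 / N) *\<^sub>R (of_int \<lfloor>N * r a\<rfloor> *\<^sub>R a) + (\<theta> a / N) *\<^sub>R a" for a
      unfolding \<theta>_def using scaleR_floor_split[OF N(1)] .
    then have "x = (1 / N) *\<^sub>R (\<Sum>a\<in>S. of_int \<lfloor>N * r a\<rfloor> *\<^sub>R a) + (\<Sum>a\<in>S. (\<theta> a / N) *\<^sub>R a)"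
      unfolding x by (simp only: sum.distrib scaleR_sum_right)
    moreover have "(1 / N) *\<^sub>R (\<Sum>a\<in>S. of_int \<lfloor>N * r a\<rfloor> *\<^sub>R a) \<in> V1"
      using W(4)[of "1 / N"] N subsetD[OF BW sum_of_int_scaleR_in_add_subgroup_gen[OF S]] by auto
    moreover have "\<bar>\<theta> a / N\<bar> < d2" for a
    proof -
      have "0 \<le> \<theta> a" "\<theta> a < 1"
        unfolding \<theta>_def by linarith+
      then have "0 \<le> \<theta> a / N" "\<theta> a / N < 1 / N"
        using N(1) by (simp_all add: divide_strict_right_mono)
      then show ?thesis
        using N(3) by linarith
    qed
    then have "(\<Sum>a\<in>S. (\<theta> a / N) *\<^sub>R a) \<in> V2"
      using d2(2)[of "\<lambda>a. \<theta> a / N"] by blast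
    ultimately show "x \<in> V"
      using V(5) by simp
  qed
  then show thesis
    using that W(2,3) by blast
qed

lemma kalton_nhd_if_abs_cauchy_summable:
  fixes A :: "'a set"
  assumes "abs_cauchy_summable A" "open U" "f \<in> fin_supp A rline" "kalton A f \<in> U"
  obtains T where "openin (lS_top A) T" "f \<in> T" "T \<subseteq> {g \<in> fin_supp A rline. kalton A g \<in> U}"
proof -
  have U0: "open {x. x + kalton A f \<in> U}" "0 \<in> {x. x + kalton A f \<in> U}"
    using open_translate[OF assms(2)] assms(4) by auto
  obtain V1 V2 where V: "open V1" "open V2" "0 \<in> V1" "0 \<in> V2"
    "\<And>x y. x \<in> V1 \<Longrightarrow> y \<in> V2 \<Longrightarrow> x + y \<in> {x. x + kalton A f \<in> U}"
    by (rule zero_nhd_add[OF U0]) (rule that)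
  obtain W where W: "open W" "0 \<in> W" "\<And>B. add_subgroup_gen B \<subseteq> W \<Longrightarrow> span B \<subseteq> V2"
    using span_subset_if_add_subgroup_gen_subset[OF V(2,4)] by blast
  obtain F where F: "finite F" "F \<subseteq> A" "add_subgroup_gen (A - F) \<subseteq> W"
    using assms(1) W(1,2) unfolding abs_cauchy_summable_def by blast
  obtain W1 where W1: "open W1" "0 \<in> W1" "\<forall>h. (\<forall>a\<in>F. h a \<in> W1) \<longrightarrow> sum h F \<in> V1"
    using zero_nhd_sum[OF F(1) V(1,3)] by blast
  define T where "T = {g \<in> fin_supp A rline. \<forall>a\<in>F. g a \<in> {x. x + - f a \<in> W1}}"
  have "openin (lS_top A) T"
    unfolding T_def using F W1(1) by (intro openin_lS_top_coordinates open_translate) auto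
  moreover have "f \<in> T"
    unfolding T_def using assms(3) W1(2) by auto
  moreover have "kalton A g \<in> U" if g: "g \<in> T" for g
  proof -
    have "(\<Sum>a\<in>F. g a - f a) \<in> V1"
      using g W1(3)[rule_format, of "\<lambda>a. g a - f a"] unfolding T_def by auto
    moreover have "kalton A g - kalton A f - (\<Sum>a\<in>F. g a - f a) \<in> V2"
      using kalton_diff_off_finite_in_span[OF assms(3) _ F(1,2), of g] g W(3)[OF F(3)]
      unfolding T_def by auto
    ultimately have "(\<Sum>a\<in>F. g a - f a) + (kalton A g - kalton A f - (\<Sum>a\<in>F. g a - f a))
        \<in> {x. x + kalton A f \<in> U}"
      by (rule V(5))
    then show ?thesis
      by simp
  qed
  ultimately show thesis
    using that[of T] unfolding T_def by blast
qed

lemma continuous_kalton_if_abs_cauchy_summable: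
  fixes A :: "'a set"
  assumes "abs_cauchy_summable A"
  shows "continuous_map (lS_top A) euclidean (kalton A)"
proof -
  have "openin (lS_top A) {g \<in> fin_supp A rline. kalton A g \<in> U}" if "open U" for U
  proof (subst openin_subopen, intro ballI)
    fix f assume "f \<in> {g \<in> fin_supp A rline. kalton A g \<in> U}"
    then obtain T where "openin (lS_top A) T" "f \<in> T" "T \<subseteq> {g \<in> fin_supp A rline. kalton A g \<in> U}"
      using kalton_nhd_if_abs_cauchy_summable[OF assms \<open>open U\<close>] by blast
    then show "\<exists>T. openin (lS_top A) T \<and> f \<in> T \<and> T \<subseteq> {g \<in> fin_supp A rline. kalton A g \<in> U}"
      by blast
  qed
  moreover have "topspace (lS_top A) = fin_supp A rline"
    unfolding lS_top_def fin_supp_def by auto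
  ultimately show ?thesis
    unfolding continuous_map_def by auto
qed

end

theorem proposition10p1:
  fixes A :: "'a::{real_vector,t2_space} set"
  assumes add_cont: "continuous_on UNIV (\<lambda>p::'a \<times> 'a. fst p + snd p)"
    and smult_cont: "continuous_on UNIV (\<lambda>p::real \<times> 'a. fst p *\<^sub>R snd p)"
    and A: "A \<subseteq> UNIV - {0}"
  shows "(continuous_map (lS_top A) euclidean (kalton A) \<longleftrightarrow>
          continuous_map (S_top A) euclidean (kalton A))
       \<and> (continuous_map (S_top A) euclidean (kalton A) \<longleftrightarrow> abs_cauchy_summable A)"
proof -
  have "continuous_map (lS_top A) euclidean (kalton A) \<Longrightarrow> continuous_map (S_top A) euclidean (kalton A)"
    unfolding S_top_eq_subtopology_lS_top by (rule continuous_map_from_subtopology)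
  moreover have "continuous_map (S_top A) euclidean (kalton A) \<Longrightarrow> abs_cauchy_summable A"
    using abs_cauchy_summable_if_continuous_kalton A by blast
  moreover have "abs_cauchy_summable A \<Longrightarrow> continuous_map (lS_top A) euclidean (kalton A)"
    using continuous_kalton_if_abs_cauchy_summable[OF add_cont smult_cont] .
  ultimately show ?thesis by blast
qed

end
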